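(* Let $a,b,c\in[0,1]$ with $1-a+b>0$, and consider the Markov chain on the three states $\{0,1,e\}$ with transition matrix (rows = current state $0,1,e$; columns = next state $0,1,e$) $$\Pi=\begin{pmatrix} a-b & 1-a & b\\ b-c & 1-b & c\\ a-b & 1-a & b\end{pmatrix},$$ assumed to have nonnegative entries. Then every stationary distribution $(p_0,p_1,p_e)$ of $\Pi$ satisfies $$p_e=\frac{c-ac+b^2}{1-a+b}.$$ In particular, with $a=\epsilon_{L-1}$, $b=\epsilon_L$, $c=\epsilon_{L+1}$, the packet error rate (stationary probability of the error state) of D-HARQ with parameters $L$ and $m=1$ equals $\dfrac{\epsilon_{L+1}-\epsilon_{L-1}\epsilon_{L+1}+\epsilon_L^2}{1-\epsilon_{L-1}+\epsilon_L}$.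
   Context: D-HARQ with $m=1$: states $0,1$ indicate how many extra transmissions (beyond $L$) the current packet may use, and $e$ is the error (packet dropped) state; $\epsilon_w$ denotes the decoding failure probability after $w$ received copies. The packet error rate of D-HARQ is defined as the stationary probability of the error state. *)

theory Defs
  imports Main "HOL.Real"
begin

datatype state = S0 | S1 | Se

lemma UNIV_state: "(UNIV :: state set) = {S0, S1, Se}"
  using state.exhaust by blast

instance state :: finite
  by standard (simp add: UNIV_state)

fun Pi_mat :: "real \<Rightarrow> real \<Rightarrow> real \<Rightarrow> state \<Rightarrow> state \<Rightarrow> real" where
  "Pi_mat a b c S0 S0 = a - b"
| "Pi_mat a b c S0 S1 = 1 - a"
| "Pi_mat a b c S0 Se = b"
| "Pi_mat a b c S1 S0 = b - c"
| "Pi_mat a b c S1 S1 = 1 - b"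
| "Pi_mat a b c S1 Se = c"
| "Pi_mat a b c Se S0 = a - b"
| "Pi_mat a b c Se S1 = 1 - a"
| "Pi_mat a b c Se Se = b"

definition stationary_dist :: "(state \<Rightarrow> state \<Rightarrow> real) \<Rightarrow> (state \<Rightarrow> real) \<Rightarrow> bool" where
  "stationary_dist P p \<longleftrightarrow>
     (\<forall>s. p s \<ge> 0) \<and> (\<Sum>s\<in>UNIV. p s) = 1 \<and>
     (\<forall>t. p t = (\<Sum>s\<in>UNIV. p s * P s t))"

end

theory Submission
  imports Defs
begin

text \<open>Rows 0 and e of the transition matrix coincide, so the next state depends only on
  whether the current state is 1. Balance at state 1 gives \<open>p\<^sub>1 (1 - a + b) = 1 - a\<close>,
  balance at e gives \<open>p\<^sub>e = b (1 - p\<^sub>1) + c p\<^sub>1\<close>, and eliminating \<open>p\<^sub>1\<close> yields the formula.\<close>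

lemma sum_UNIV_state: "(\<Sum>s\<in>UNIV. f s) = f S0 + f S1 + f Se"
  by (simp add: UNIV_state add.assoc)

lemma stationary_distD:
  assumes "stationary_dist P p"
  shows "p S0 + p S1 + p Se = 1"
    and "p t = p S0 * P S0 t + p S1 * P S1 t + p Se * P Se t"
  using assms unfolding stationary_dist_def sum_UNIV_state by blast+

lemma Pi_mat_stationary_S1:
  assumes "stationary_dist (Pi_mat a b c) p"
  shows "p S1 * (1 - a + b) = 1 - a"
proof -
  have "p S1 = p S0 * (1 - a) + p S1 * (1 - b) + p Se * (1 - a)"
    using stationary_distD(2)[OF assms, of S1] by simp
  with stationary_distD(1)[OF assms] show ?thesis
    by algebra
qed

lemma Pi_mat_stationary_Se:
  assumes "stationary_dist (Pi_mat a b c) p"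
  shows "p Se = b + (c - b) * p S1"
proof -
  have "p Se = p S0 * b + p S1 * c + p Se * b"
    using stationary_distD(2)[OF assms, of Se] by simp
  with stationary_distD(1)[OF assms] show ?thesis
    by algebra
qed

theorem mainTheorem2:
  fixes a b c :: real and p :: "state \<Rightarrow> real"
  assumes "a \<in> {0..1}" and "b \<in> {0..1}" and "c \<in> {0..1}"
    and "1 - a + b > 0"
    and "\<forall>s t. Pi_mat a b c s t \<ge> 0"
    and "stationary_dist (Pi_mat a b c) p"
  shows "p Se = (c - a * c + b ^ 2) / (1 - a + b)"
proof -
  have "p Se * (1 - a + b) = b * (1 - a + b) + (c - b) * (p S1 * (1 - a + b))"
    by (subst Pi_mat_stationary_Se[OF assms(6)]) (simp add: algebra_simps)
  also have "\<dots> = c - a * c + b ^ 2"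
    unfolding Pi_mat_stationary_S1[OF assms(6)] by (simp add: algebra_simps power2_eq_square)
  finally show ?thesis
    using assms(4) by (simp add: field_simps)
qed

end
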